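(* Let $E$ be a finite graph, i.e. a metric continuum that is the union of finitely many arcs $E_1,\dots,E_r$ ($r\ge1$), any two of which are either disjoint or intersect only in one or both of their end points. Then there exists an onto map $F:E\to E$ that is topologically transitive (indeed has a dense orbit) and has a dense set of periodic points; $F$ is chaotic on $E$.
   Context: A map $g$ on a metric space $(Z,d)$ is chaotic (Devaney) if it is onto, topologically transitive (for nonempty open $U,V$ there is $n>0$ with $g^n(U)\cap V\neq\emptyset$), has a dense set of periodic points, and is sensitive to initial conditions (there is $\eta>0$ such that for every $x$ and every neighbourhood $N$ of $x$ there are $y\in N$ and $n\ge0$ with $d(g^n(x),g^n(y))>\eta$). An arc is a space homeomorphic to $[0,1]$; its end points are the images of $0$ and $1$. *)

theory Defs
  imports "HOL-Analysis.Analysis"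
begin

definition finite_graph :: "'a::metric_space set \<Rightarrow> bool" where
  "finite_graph E \<longleftrightarrow> E \<noteq> {} \<and> compact E \<and> connected E \<and>
     (\<exists>r::nat. \<exists>g :: nat \<Rightarrow> real \<Rightarrow> 'a. r \<ge> 1 \<and> (\<forall>i<r. arc (g i)) \<and>
        E = (\<Union>i<r. path_image (g i)) \<and>
        (\<forall>i<r. \<forall>j<r. i \<noteq> j \<longrightarrow>
            path_image (g i) \<inter> path_image (g j)
              \<subseteq> {pathstart (g i), pathfinish (g i)} \<inter> {pathstart (g j), pathfinish (g j)}))"

definition topologically_transitive_on :: "'a::metric_space set \<Rightarrow> ('a \<Rightarrow> 'a) \<Rightarrow> bool" where
  "topologically_transitive_on E g \<longleftrightarrow>
     (\<forall>U V. openin (top_of_set E) U \<and> openin (top_of_set E) V \<and> U \<noteq> {} \<and> V \<noteq> {} \<longrightarrow>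
        (\<exists>n>0. (g ^^ n) ` U \<inter> V \<noteq> {}))"

definition periodic_points_dense_on :: "'a::metric_space set \<Rightarrow> ('a \<Rightarrow> 'a) \<Rightarrow> bool" where
  "periodic_points_dense_on E g \<longleftrightarrow> E \<subseteq> closure {x \<in> E. \<exists>n>0. (g ^^ n) x = x}"

definition sensitive_on :: "'a::metric_space set \<Rightarrow> ('a \<Rightarrow> 'a) \<Rightarrow> bool" where
  "sensitive_on E g \<longleftrightarrow> (\<exists>\<eta>>0. \<forall>x\<in>E. \<forall>N. N \<subseteq> E \<and> x \<in> N \<and>
       (\<exists>U. openin (top_of_set E) U \<and> x \<in> U \<and> U \<subseteq> N) \<longrightarrow>
       (\<exists>y\<in>N. \<exists>n. dist ((g ^^ n) x) ((g ^^ n) y) > \<eta>))"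

definition chaotic_on :: "'a::metric_space set \<Rightarrow> ('a \<Rightarrow> 'a) \<Rightarrow> bool" where
  "chaotic_on E g \<longleftrightarrow> g ` E = E \<and> topologically_transitive_on E g \<and>
     periodic_points_dense_on E g \<and> sensitive_on E g"

definition has_dense_orbit_on :: "'a::metric_space set \<Rightarrow> ('a \<Rightarrow> 'a) \<Rightarrow> bool" where
  "has_dense_orbit_on E g \<longleftrightarrow> (\<exists>x\<in>E. E \<subseteq> closure (range (\<lambda>n. (g ^^ n) x)))"

end

theory Submission
  imports Defs
begin

text \<open>Choose a closed walk through the graph that traverses every arc, and let \<open>tour_path\<close>
  run along it on \<open>[0, 1]\<close>, spending time \<open>1/M\<close> on each of its \<open>M \<ge> 2\<close> steps.
  Since \<open>tour_path\<close> sends both \<open>0\<close> and \<open>1\<close> to the same vertex, following it in the arc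
  parameter gives a well defined continuous surjection \<open>F\<close> of \<open>E\<close>. Then \<open>F ^^ n\<close> maps every
  \<open>M\<close>-adic interval of level \<open>n\<close> of an arc affinely onto a whole arc, and one level further onto
  any prescribed arc. So every open set is eventually mapped over every arc: this gives
  transitivity and sensitivity, Brouwer's fixed point theorem on a piece mapped over its own arc
  gives periodic points, and nested intervals, one for each of countably many target pieces,
  give a point with dense orbit.\<close>

definition adic_piece :: "nat \<Rightarrow> nat \<Rightarrow> nat \<Rightarrow> real \<Rightarrow> real" where
  "adic_piece N n Q u = (real Q + u) / real N ^ n"

lemma adic_piece_0 [simp]: "adic_piece N 0 0 u = u"
  by (simp add: adic_piece_def)

lemma adic_piece_strict_mono: "N > 0 \<Longrightarrow> u < v \<Longrightarrow> adic_piece N n Q u < adic_piece N n Q v"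
  by (simp add: adic_piece_def divide_strict_right_mono)

lemma adic_piece_image:
  assumes "N > 0"
  shows "adic_piece N n Q ` {0..1} = {adic_piece N n Q 0 .. adic_piece N n Q 1}"
proof -
  have K: "real N ^ n > 0"
    using assms by simp
  have "t \<in> adic_piece N n Q ` {0..1}" if "t \<in> {adic_piece N n Q 0 .. adic_piece N n Q 1}" for t
  proof -
    have "real N ^ n * t - real Q \<in> {0..1}" "t = adic_piece N n Q (real N ^ n * t - real Q)"
      using that K by (auto simp: adic_piece_def field_simps)
    then show ?thesis
      by blast
  qed
  moreover have "adic_piece N n Q ` {0..1} \<subseteq> {adic_piece N n Q 0 .. adic_piece N n Q 1}"
    using K by (auto simp: adic_piece_def divide_right_mono)
  ultimately show ?thesis
    by blast
qed

lemma adic_piece_in_unit: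
  assumes "Q < N ^ n" "u \<in> {0..1}"
  shows "adic_piece N n Q u \<in> {0..1}"
proof -
  have "real Q + 1 \<le> real N ^ n"
    using assms(1) by (metis of_nat_less_iff of_nat_power Suc_leI of_nat_Suc add.commute of_nat_le_iff)
  moreover have "real N ^ n > 0"
    using assms(1) by (metis gr_implies_not0 of_nat_0_less_iff of_nat_power zero_less_iff_neq_zero)
  ultimately show ?thesis
    using assms(2) by (auto simp: adic_piece_def divide_le_eq_1)
qed

lemma adic_piece_compose:
  assumes "N > 0"
  shows "adic_piece N n Q (adic_piece N m P u) = adic_piece N (n + m) (Q * N ^ m + P) u"
  using assms by (simp add: adic_piece_def power_add field_simps)

lemma adic_piece_Suc:
  assumes "N > 0"
  shows "adic_piece N (Suc n) (Q * N + p) u = adic_piece N n Q ((real p + u) / real N)"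
  using assms by (simp add: adic_piece_def field_simps)

lemma adic_subpiece:
  assumes "p < N"
  shows "adic_piece N (Suc n) (Q * N + p) ` {0..1} \<subseteq> adic_piece N n Q ` {0..1}"
proof -
  have "(real p + u) / real N \<in> {0..1}" if "u \<in> {0..1}" for u
    using adic_piece_in_unit[of p N 1 u] assms that by (simp add: adic_piece_def)
  then show ?thesis
    using assms by (auto simp: adic_piece_Suc)
qed

lemma adic_subpiece_index_less:
  fixes N Q p :: nat
  assumes "Q < N ^ n" "p < N"
  shows "Q * N + p < N ^ Suc n"
proof -
  have "Q * N + p < (Q + 1) * N"
    using assms(2) by simp
  also have "\<dots> \<le> N ^ n * N"
    using assms(1) by (intro mult_right_mono) auto
  finally show ?thesis
    by (simp add: mult.commute)
qed

lemma adic_piece_reflect: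
  assumes "Q < N ^ n"
  shows "1 - adic_piece N n Q u = adic_piece N n (N ^ n - 1 - Q) (1 - u)"
proof -
  have "real N ^ n > 0"
    using assms by (metis gr_implies_not0 of_nat_0_less_iff of_nat_power zero_less_iff_neq_zero)
  then show ?thesis
    using assms by (simp add: adic_piece_def of_nat_diff field_simps)
qed

lemma unit_interval_piece_decomp:
  fixes N :: nat
  assumes "N > 0" and "t \<in> {0..1}"
  obtains p u where "p < N" "u \<in> {0..1}" "t = (real p + u) / real N"
proof (cases "t = 1")
  case True
  with assms show ?thesis
    using that[of "N - 1" 1] by (simp add: of_nat_diff)
next
  case False
  define p where "p = nat \<lfloor>real N * t\<rfloor>"
  have "real N * t < real N"
    using assms False by simp
  moreover have "real p \<le> real N * t" "real N * t < real p + 1"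
    using assms unfolding p_def by (simp_all add: of_nat_nat)
  ultimately have "p < N"
    by simp
  with \<open>real p \<le> real N * t\<close> \<open>real N * t < real p + 1\<close> show ?thesis
    using assms that[of p "real N * t - real p"] by auto
qed

lemma adic_interval_within:
  fixes N :: nat and c d :: real
  assumes "N \<ge> 2" and "0 \<le> c" "c < d" "d \<le> 1"
  obtains n Q where "Q < N ^ n" "adic_piece N n Q ` {0..1} \<subseteq> {c..d}"
proof -
  obtain n where n: "2 / (d - c) < real N ^ n"
    using real_arch_pow[of "real N" "2 / (d - c)"] assms by auto
  define K where "K = real N ^ n"
  have K: "K > 0" "2 < (d - c) * K"
    using n assms unfolding K_def by (auto simp: field_simps)
  define Q where "Q = nat \<lceil>c * K\<rceil>"
  have Q: "c * K \<le> real Q" "real Q < c * K + 1"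
    using assms K unfolding Q_def by (simp_all add: of_nat_nat) linarith+
  have "real Q + 1 \<le> d * K"
    using Q K by (simp add: algebra_simps)
  moreover have "d * K \<le> K"
    using assms K by simp
  ultimately have "Q < N ^ n"
    unfolding K_def by (metis of_nat_less_iff of_nat_power less_le_trans less_add_one)
  moreover have "c \<le> adic_piece N n Q 0" "adic_piece N n Q 1 \<le> d"
    using Q K \<open>real Q + 1 \<le> d * K\<close> by (simp_all add: adic_piece_def K_def[symmetric] field_simps)
  ultimately show ?thesis
    using that adic_piece_image[of N n Q] assms by auto
qed

lemma nested_intervals_countable:
  fixes P :: "'i::countable \<Rightarrow> real \<Rightarrow> bool"
  assumes shrink: "\<And>q c d. a \<le> c \<Longrightarrow> c < d \<Longrightarrow> d \<le> b \<Longrightarrow>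
      \<exists>c' d'. c \<le> c' \<and> c' < d' \<and> d' \<le> d \<and> (\<forall>t\<in>{c'..d'}. P q t)"
    and "a < b"
  shows "\<exists>t\<in>{a..b}. \<forall>q. P q t"
proof -
  define good where "good q I J \<longleftrightarrow> fst I \<le> fst J \<and> fst J < snd J \<and> snd J \<le> snd I \<and>
      (\<forall>t\<in>{fst J..snd J}. P q t)" for q and I J :: "real \<times> real"
  define sub where "sub q I = (SOME J. good q I J)" for q I
  have sub: "good q I (sub q I)" if "a \<le> fst I" "fst I < snd I" "snd I \<le> b" for q I
  proof -
    have "\<exists>J. good q I J"
      using shrink[OF that] unfolding good_def by auto
    then show ?thesis
      unfolding sub_def by (rule someI_ex)
  qed
  define I where "I = rec_nat (a, b) (\<lambda>k. sub (from_nat k))"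
  have I_Suc: "I (Suc k) = sub (from_nat k) (I k)" for k
    by (simp add: I_def)
  have inv: "a \<le> fst (I k) \<and> fst (I k) < snd (I k) \<and> snd (I k) \<le> b" for k
  proof (induction k)
    case 0
    then show ?case using \<open>a < b\<close> by (simp add: I_def)
  next
    case (Suc k)
    then show ?case using sub[of "I k" "from_nat k"] unfolding good_def I_Suc by auto
  qed
  define S where "S k = {fst (I k) .. snd (I k)}" for k
  have "S (Suc k) \<subseteq> S k" for k
    using sub[of "I k" "from_nat k"] inv[of k] unfolding good_def S_def I_Suc by auto
  then have "S n \<subseteq> S m" if "m \<le> n" for m n
    using that by (rule lift_Suc_antimono_le)
  moreover have "closed (S k)" for k
    unfolding S_def by simp
  moreover have "S k \<noteq> {}" for k
    using inv[of k] unfolding S_def by auto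
  moreover have "bounded (S 0)"
    unfolding S_def by simp
  ultimately obtain t where t: "\<And>k. t \<in> S k"
    using bounded_closed_nest[of S] by blast
  have "P q t" for q
    using t[of "Suc (to_nat q)"] sub[of "I (to_nat q)" "q"] inv[of "to_nat q"]
    unfolding good_def S_def I_Suc by auto
  moreover have "t \<in> {a..b}"
    using t[of 0] by (simp add: S_def I_def)
  ultimately show ?thesis by blast
qed

definition edge_path :: "(nat \<Rightarrow> real \<Rightarrow> 'a) \<Rightarrow> nat \<times> bool \<Rightarrow> real \<Rightarrow> 'a" where
  "edge_path g s u = g (fst s) (if snd s then u else 1 - u)"

definition reverse_edge :: "nat \<times> bool \<Rightarrow> nat \<times> bool" where
  "reverse_edge s = (fst s, \<not> snd s)"

lemma edge_path_reverse_edge: "edge_path g (reverse_edge s) u = edge_path g s (1 - u)"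
  by (simp add: edge_path_def reverse_edge_def)

fun walk :: "(nat \<Rightarrow> real \<Rightarrow> 'a) \<Rightarrow> nat \<Rightarrow> 'a \<Rightarrow> (nat \<times> bool) list \<Rightarrow> 'a \<Rightarrow> bool" where
  "walk g r x [] y \<longleftrightarrow> x = y"
| "walk g r x (s # ws) y \<longleftrightarrow> fst s < r \<and> edge_path g s 0 = x \<and> walk g r (edge_path g s 1) ws y"

lemma walk_append: "walk g r x ws y \<Longrightarrow> walk g r y vs z \<Longrightarrow> walk g r x (ws @ vs) z"
  by (induction ws arbitrary: x) auto

lemma walk_rev: "walk g r x ws y \<Longrightarrow> walk g r y (rev (map reverse_edge ws)) x"
proof (induction ws arbitrary: x)
  case (Cons s ws)
  then have "walk g r y (rev (map reverse_edge ws)) (edge_path g s 1)"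
    by simp
  moreover have "walk g r (edge_path g s 1) [reverse_edge s] x"
    using Cons.prems by (simp add: edge_path_reverse_edge) (simp add: reverse_edge_def)
  ultimately show ?case
    using walk_append by fastforce
qed simp

lemma walk_concat: "(\<And>w. w \<in> set ws \<Longrightarrow> walk g r x w x) \<Longrightarrow> walk g r x (concat ws) x"
  by (induction ws) (auto intro: walk_append)

lemma walk_edge_less: "walk g r x ws y \<Longrightarrow> s \<in> set ws \<Longrightarrow> fst s < r"
  by (induction ws arbitrary: x) auto

lemma walk_first: "walk g r x ws y \<Longrightarrow> ws \<noteq> [] \<Longrightarrow> edge_path g (ws ! 0) 0 = x"
  by (cases ws) auto

lemma walk_last: "walk g r x ws y \<Longrightarrow> ws \<noteq> [] \<Longrightarrow> edge_path g (ws ! (length ws - 1)) 1 = y"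
  by (induction ws arbitrary: x) (auto simp: nth_Cons' split: if_splits)

lemma walk_consecutive:
  "walk g r x ws y \<Longrightarrow> Suc k < length ws \<Longrightarrow> edge_path g (ws ! k) 1 = edge_path g (ws ! Suc k) 0"
  by (induction ws arbitrary: x k) (auto simp: nth_Cons' walk_first)

locale arc_graph =
  fixes E :: "'a::metric_space set" and r :: nat and g :: "nat \<Rightarrow> real \<Rightarrow> 'a"
  assumes r_pos: "r \<ge> 1"
    and arc: "\<And>i. i < r \<Longrightarrow> arc (g i)"
    and E_eq: "E = (\<Union>i<r. path_image (g i))"
    and arcs_meet_at_ends: "\<And>i j. i < r \<Longrightarrow> j < r \<Longrightarrow> i \<noteq> j \<Longrightarrow>
        path_image (g i) \<inter> path_image (g j)
          \<subseteq> {pathstart (g i), pathfinish (g i)} \<inter> {pathstart (g j), pathfinish (g j)}"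
    and connected_E: "connected E"
begin

lemma arc_eq_iff: "i < r \<Longrightarrow> s \<in> {0..1} \<Longrightarrow> t \<in> {0..1} \<Longrightarrow> g i s = g i t \<longleftrightarrow> s = t"
  using arc[of i] unfolding arc_def inj_on_def by blast

lemma arc_in_E: "i < r \<Longrightarrow> t \<in> {0..1} \<Longrightarrow> g i t \<in> E"
  unfolding E_eq path_image_def by blast

lemma E_cases:
  assumes "x \<in> E"
  obtains i t where "i < r" "t \<in> {0..1}" "x = g i t"
  using assms unfolding E_eq path_image_def by blast

lemma edge_path_in_E: "fst s < r \<Longrightarrow> u \<in> {0..1} \<Longrightarrow> edge_path g s u \<in> E"
  unfolding edge_path_def by (auto intro: arc_in_E)

lemma closed_arc_image: "i < r \<Longrightarrow> closed (path_image (g i))"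
  by (simp add: arc arc_imp_path closed_path_image)

lemma shared_point_is_end:
  assumes "i < r" "j < r" "i \<noteq> j" "x \<in> path_image (g i)" "x \<in> path_image (g j)"
  shows "x \<in> {g i 0, g i 1}"
  using arcs_meet_at_ends[OF assms(1-3)] assms(4,5) by (auto simp: pathstart_def pathfinish_def)

definition reachable :: "'a \<Rightarrow> bool" where
  "reachable x \<longleftrightarrow> (\<exists>ws. walk g r (g 0 0) ws x)"

lemma reachable_arc_ends: "i < r \<Longrightarrow> reachable (g i 0) \<longleftrightarrow> reachable (g i 1)"
proof -
  assume i: "i < r"
  have "walk g r (g i 0) [(i, True)] (g i 1)" "walk g r (g i 1) [(i, False)] (g i 0)"
    using i by (simp_all add: edge_path_def)
  then show ?thesis
    unfolding reachable_def by (blast intro: walk_append)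
qed

text \<open>The arcs reachable from \<open>g 0 0\<close> and the remaining ones cover \<open>E\<close> by two closed
  sets which can only meet in an end point; connectedness leaves no remaining arc.\<close>

lemma reachable_arc_start: "i < r \<Longrightarrow> reachable (g i 0)"
proof (rule ccontr)
  assume i: "i < r" and not_reached: "\<not> reachable (g i 0)"
  define A where "A = {j. j < r \<and> reachable (g j 0)}"
  define S1 where "S1 = (\<Union>j\<in>A. path_image (g j))"
  define S2 where "S2 = (\<Union>j\<in>{..<r} - A. path_image (g j))"
  have "closed S1" "closed S2"
    unfolding S1_def S2_def A_def by (auto intro!: closed_Union closed_arc_image)
  moreover have "E \<subseteq> S1 \<union> S2"
    unfolding E_eq S1_def S2_def by auto
  moreover have "0 \<in> A"
    using r_pos unfolding A_def reachable_def by (auto intro: exI[of _ "[]"])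
  then have "g 0 0 \<in> S1 \<inter> E"
    using r_pos arc_in_E[of 0 0] unfolding S1_def path_image_def by force
  moreover have "g i 0 \<in> S2 \<inter> E"
    using i not_reached arc_in_E[of i 0] unfolding S2_def A_def path_image_def by force
  moreover have "S1 \<inter> S2 \<inter> E = {}"
  proof (rule ccontr)
    assume "S1 \<inter> S2 \<inter> E \<noteq> {}"
    then obtain x j k where j: "j \<in> A" and k: "k < r" "k \<notin> A"
      and x: "x \<in> path_image (g j)" "x \<in> path_image (g k)"
      unfolding S1_def S2_def by auto
    have "j < r" "j \<noteq> k"
      using j k unfolding A_def by auto
    then have x_ends: "x \<in> {g j 0, g j 1}" "x \<in> {g k 0, g k 1}"
      using shared_point_is_end x k by blast+
    have "reachable (g j 0)"
      using j unfolding A_def by simp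
    then have "reachable x"
      using x_ends(1) reachable_arc_ends[OF \<open>j < r\<close>] by blast
    then have "reachable (g k 0)"
      using x_ends(2) reachable_arc_ends[OF k(1)] by blast
    with k show False
      unfolding A_def by simp
  qed
  ultimately show False
    using connected_E unfolding connected_closed by blast
qed

lemma closed_walk_through_all_arcs:
  obtains L where "walk g r (g 0 0) L (g 0 0)" "length L \<ge> 2" "\<And>j. j < r \<Longrightarrow> (j, True) \<in> set L"
proof -
  obtain W where W: "\<And>i. i < r \<Longrightarrow> walk g r (g 0 0) (W i) (g i 0)"
    using reachable_arc_start unfolding reachable_def by metis
  define loop where "loop i = W i @ [(i, True), (i, False)] @ rev (map reverse_edge (W i))" for i
  have "walk g r (g 0 0) (loop i) (g 0 0)" if i: "i < r" for i
  proof -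
    have "walk g r (g i 0) [(i, True), (i, False)] (g i 0)"
      using i by (simp add: edge_path_def)
    then show ?thesis
      unfolding loop_def using W[OF i] by (blast intro: walk_append walk_rev)
  qed
  then have "walk g r (g 0 0) (concat (map loop [0..<r])) (g 0 0)"
    by (intro walk_concat) auto
  moreover have "length (concat (map loop [0..<r])) \<ge> 2"
    using r_pos by (cases r) (auto simp: loop_def)
  moreover have "(j, True) \<in> set (concat (map loop [0..<r]))" if "j < r" for j
    using that unfolding loop_def by force
  ultimately show ?thesis
    using that by blast
qed

end

locale arc_graph_tour = arc_graph +
  fixes L :: "(nat \<times> bool) list"
  assumes tour_walk: "walk g r (g 0 0) L (g 0 0)"
    and tour_length: "length L \<ge> 2"
    and tour_covers: "\<And>j. j < r \<Longrightarrow> (j, True) \<in> set L"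
begin

abbreviation M :: nat where "M \<equiv> length L"

lemma M_pos: "real M > 0"
  using tour_length by (cases L) auto

lemma tour_nonempty: "L \<noteq> []"
  using tour_length by auto

lemma tour_edge_less: "k < M \<Longrightarrow> fst (L ! k) < r"
  using walk_edge_less[OF tour_walk] by simp

text \<open>The \<open>min\<close> only matters at \<open>t = 1\<close>.\<close>

definition tour_path :: "real \<Rightarrow> 'a" where
  "tour_path t = (let p = min (nat \<lfloor>real M * t\<rfloor>) (M - 1) in edge_path g (L ! p) (real M * t - real p))"

lemma tour_path_piece:
  assumes "p < M" "u \<in> {0..1}"
  shows "tour_path ((real p + u) / real M) = edge_path g (L ! p) u"
proof -
  have Mt: "real M * ((real p + u) / real M) = real p + u"
    using M_pos by simp
  consider "u < 1" | "u = 1" "p + 1 < M" | "u = 1" "p + 1 = M"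
    using assms by fastforce
  then show ?thesis
  proof cases
    case 1
    then have "\<lfloor>real p + u\<rfloor> = int p"
      using assms by (simp add: floor_eq_iff)
    then show ?thesis
      using assms unfolding tour_path_def Mt by simp
  next
    case 2
    then have "tour_path ((real p + u) / real M) = edge_path g (L ! Suc p) 0"
      unfolding tour_path_def Mt by (simp add: nat_add_distrib)
    then show ?thesis
      using 2 walk_consecutive[OF tour_walk, of p] by simp
  next
    case 3
    then have "M = Suc p"
      by simp
    with 3 show ?thesis
      unfolding tour_path_def Mt by simp
  qed
qed

lemma tour_path_0: "tour_path 0 = g 0 0"
  using tour_path_piece[of 0 0] M_pos walk_first[OF tour_walk tour_nonempty] by simp

lemma tour_path_1: "tour_path 1 = g 0 0"
  using tour_path_piece[of "M - 1" 1] M_pos walk_last[OF tour_walk tour_nonempty]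
  by (simp add: of_nat_diff)

lemma tour_path_in_E:
  assumes "t \<in> {0..1}"
  shows "tour_path t \<in> E"
proof -
  obtain p u where "p < M" "u \<in> {0..1}" "t = (real p + u) / real M"
    using M_pos assms unit_interval_piece_decomp[of M t] by auto
  then show ?thesis
    by (simp add: tour_path_piece edge_path_in_E tour_edge_less)
qed

lemma continuous_on_edge_path: "fst s < r \<Longrightarrow> continuous_on {0..1} (edge_path g s)"
proof -
  assume s: "fst s < r"
  then have cont: "continuous_on {0..1} (g (fst s))"
    using arc arc_imp_path path_def by blast
  show ?thesis
  proof (cases "snd s")
    case True
    then show ?thesis
      using cont by (simp add: edge_path_def)
  next
    case False
    have "(\<lambda>u. 1 - u) ` {0..1} \<subseteq> {0..1::real}"
      by auto
    then show ?thesis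
      using False by (auto simp: edge_path_def intro!: continuous_on_compose2[OF cont] continuous_intros)
  qed
qed

lemma continuous_on_tour_path: "continuous_on {0..1} tour_path"
proof -
  define I where "I p = {real p / real M .. (real p + 1) / real M}" for p
  have cover: "{0..1} = (\<Union>p<M. I p)"
  proof
    show "{0..1} \<subseteq> (\<Union>p<M. I p)"
    proof
      fix t :: real
      assume "t \<in> {0..1}"
      then obtain p u where "p < M" "u \<in> {0..1}" "t = (real p + u) / real M"
        using M_pos unit_interval_piece_decomp[of M t] by auto
      then show "t \<in> (\<Union>p<M. I p)"
        using M_pos by (intro UN_I[of p]) (auto simp: I_def divide_right_mono)
    qed
    have "I p \<subseteq> {0..1}" if "p < M" for p
    proof -
      have "0 \<le> real p / real M" "(real p + 1) / real M \<le> 1"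
        using that M_pos by (simp_all add: divide_le_eq_1)
      then show ?thesis
        unfolding I_def by auto
    qed
    then show "(\<Union>p<M. I p) \<subseteq> {0..1}"
      by blast
  qed
  have piece_cont: "continuous_on (I p) tour_path" if p: "p < M" for p
  proof -
    have param: "real M * t - real p \<in> {0..1}" "(real p + (real M * t - real p)) / real M = t"
      if "t \<in> I p" for t
      using that M_pos by (auto simp: I_def field_simps)
    then have "continuous_on (I p) (\<lambda>t. edge_path g (L ! p) (real M * t - real p))"
      by (intro continuous_on_compose2[OF continuous_on_edge_path[OF tour_edge_less[OF p]]]
          continuous_intros) auto
    moreover have "edge_path g (L ! p) (real M * t - real p) = tour_path t" if "t \<in> I p" for t
      using tour_path_piece[OF p] param[OF that] by metis
    ultimately show ?thesis
      by (rule continuous_on_eq)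
  qed
  show ?thesis
    unfolding cover using piece_cont by (intro continuous_on_closed_Union) (auto simp: I_def)
qed

text \<open>On each arc \<open>F\<close> follows \<open>tour_path\<close> in the arc parameter; this is consistent at
  points shared by two arcs because these are end points, all sent to \<open>g 0 0\<close>.\<close>

definition F :: "'a \<Rightarrow> 'a" where
  "F x = tour_path (SOME t. t \<in> {0..1} \<and> (\<exists>i<r. g i t = x))"

lemma F_arc:
  assumes i: "i < r" and t: "t \<in> {0..1}"
  shows "F (g i t) = tour_path t"
proof -
  define t' where "t' = (SOME t'. t' \<in> {0..1} \<and> (\<exists>j<r. g j t' = g i t))"
  have "\<exists>t'. t' \<in> {0..1} \<and> (\<exists>j<r. g j t' = g i t)"
    using i t by blast
  then have "t' \<in> {0..1} \<and> (\<exists>j<r. g j t' = g i t)"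
    unfolding t'_def by (rule someI_ex)
  then obtain j where t': "t' \<in> {0..1}" and j: "j < r" "g j t' = g i t"
    by blast
  have "tour_path t' = tour_path t"
  proof (cases "j = i")
    case True
    then show ?thesis
      using j arc_eq_iff[OF i t' t] by simp
  next
    case False
    have "g i t \<in> path_image (g i)" "g i t \<in> path_image (g j)"
      using t t' j unfolding path_image_def by (auto intro: image_eqI[of _ _ t'])
    then have "g i t \<in> {g i 0, g i 1}" "g j t' \<in> {g j 0, g j 1}"
      using shared_point_is_end[OF i j(1)] shared_point_is_end[OF j(1) i False] False j(2)
      by auto
    then have "t \<in> {0, 1}" "t' \<in> {0, 1}"
      using arc_eq_iff[OF i t] arc_eq_iff[OF j(1) t'] by auto
    then show ?thesis
      using tour_path_0 tour_path_1 by auto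
  qed
  then show ?thesis
    unfolding F_def t'_def[symmetric] by simp
qed

lemma continuous_on_F: "continuous_on E F"
proof -
  have "continuous_on (path_image (g i)) F" if i: "i < r" for i
  proof -
    obtain h where h: "homeomorphism {0..1} (path_image (g i)) (g i) h"
      using homeomorphism_arc[OF arc[OF i]] by blast
    then have "continuous_on (path_image (g i)) h" "h ` path_image (g i) \<subseteq> {0..1}"
      unfolding homeomorphism_def by auto
    then have "continuous_on (path_image (g i)) (tour_path \<circ> h)"
      by (intro continuous_on_compose continuous_on_subset[OF continuous_on_tour_path])
    moreover have "(tour_path \<circ> h) x = F x" if "x \<in> path_image (g i)" for x
      using h that F_arc[OF i] unfolding homeomorphism_def by (metis comp_apply image_eqI)
    ultimately show ?thesis
      using continuous_on_eq by blast
  qed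
  then show ?thesis
    unfolding E_eq by (intro continuous_on_closed_Union) (auto intro: closed_arc_image)
qed

lemma F_image: "F ` E = E"
proof
  show "F ` E \<subseteq> E"
    by (auto elim!: E_cases simp: F_arc tour_path_in_E)
  show "E \<subseteq> F ` E"
  proof
    fix y
    assume "y \<in> E"
    then obtain j t where j: "j < r" and t: "t \<in> {0..1}" and y: "y = g j t"
      by (rule E_cases)
    obtain k where k: "k < M" "L ! k = (j, True)"
      using tour_covers[OF j] by (auto simp: in_set_conv_nth)
    have x: "(real k + t) / real M \<in> {0..1}"
      using adic_piece_in_unit[of k M 1 t] k t by (simp add: adic_piece_def)
    have "F (g 0 ((real k + t) / real M)) = y"
      using F_arc[OF _ x] r_pos tour_path_piece[OF k(1) t] k y by (simp add: edge_path_def)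
    moreover have "g 0 ((real k + t) / real M) \<in> E"
      using x r_pos by (simp add: arc_in_E)
    ultimately show "y \<in> F ` E"
      by blast
  qed
qed

definition next_edge :: "nat \<times> bool \<Rightarrow> nat \<Rightarrow> nat \<times> bool" where
  "next_edge s p = (if snd s then L ! p else reverse_edge (L ! (M - 1 - p)))"

lemma next_edge_less: "p < M \<Longrightarrow> fst (next_edge s p) < r"
  using tour_edge_less by (simp add: next_edge_def reverse_edge_def)

lemma next_edge_onto:
  assumes "j < r"
  obtains p b where "p < M" "next_edge s p = (j, b)"
proof -
  obtain k where k: "k < M" "L ! k = (j, True)"
    using tour_covers[OF assms] by (auto simp: in_set_conv_nth)
  show ?thesis
  proof (cases "snd s")
    case True
    then show ?thesis
      using that[of k True] k by (simp add: next_edge_def)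
  next
    case False
    have "M - 1 - (M - 1 - k) = k"
      using k by simp
    then show ?thesis
      using that[of "M - 1 - k" False] k False by (simp add: next_edge_def reverse_edge_def)
  qed
qed

lemma F_edge_path_piece:
  assumes s: "fst s < r" and p: "p < M" and u: "u \<in> {0..1}"
  shows "F (edge_path g s ((real p + u) / real M)) = edge_path g (next_edge s p) u"
proof -
  define w where "w = (real p + u) / real M"
  have w: "w \<in> {0..1}"
    using adic_piece_in_unit[of p M 1 u] p u by (simp add: adic_piece_def w_def)
  show ?thesis
  proof (cases "snd s")
    case True
    then show ?thesis
      using F_arc[OF s w] tour_path_piece[OF p u] by (simp add: edge_path_def next_edge_def w_def)
  next
    case False
    have "1 - w = (real (M - 1 - p) + (1 - u)) / real M"
      using adic_piece_reflect[of p M 1 u] p by (simp add: adic_piece_def w_def)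
    moreover have "M - 1 - p < M" "1 - u \<in> {0..1}"
      using p u by auto
    ultimately have "tour_path (1 - w) = edge_path g (reverse_edge (L ! (M - 1 - p))) u"
      using tour_path_piece by (simp add: edge_path_reverse_edge)
    moreover have "1 - w \<in> {0..1}"
      using w by simp
    ultimately show ?thesis
      using F_arc[OF s] False by (simp add: edge_path_def next_edge_def w_def)
  qed
qed

lemma F_iterate_piece_step:
  assumes s: "fst s < r" and p: "p < M"
    and piece: "\<And>u. u \<in> {0..1} \<Longrightarrow> (F ^^ n) (g i (adic_piece M n Q u)) = edge_path g s u"
    and u: "u \<in> {0..1}"
  shows "(F ^^ Suc n) (g i (adic_piece M (Suc n) (Q * M + p) u)) = edge_path g (next_edge s p) u"
proof -
  have "(real p + u) / real M \<in> {0..1}"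
    using adic_piece_in_unit[of p M 1 u] p u by (simp add: adic_piece_def)
  then show ?thesis
    using piece F_edge_path_piece[OF s p u] M_pos by (simp add: adic_piece_Suc)
qed

lemma F_iterate_piece:
  assumes "i < r" "Q < M ^ n"
  shows "\<exists>s. fst s < r \<and> (\<forall>u\<in>{0..1}. (F ^^ n) (g i (adic_piece M n Q u)) = edge_path g s u)"
  using assms(2)
proof (induction n arbitrary: Q)
  case 0
  then show ?case
    using assms(1) by (intro exI[of _ "(i, True)"]) (simp add: edge_path_def)
next
  case (Suc n)
  have "Q div M < M ^ n"
    using Suc.prems M_pos by (simp add: less_mult_imp_div_less mult.commute)
  then obtain s where s: "fst s < r"
    and piece: "\<forall>u\<in>{0..1}. (F ^^ n) (g i (adic_piece M n (Q div M) u)) = edge_path g s u"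
    using Suc.IH by blast
  have "Q mod M < M" "Q = Q div M * M + Q mod M"
    using M_pos by simp_all
  then show ?case
    using F_iterate_piece_step[OF s _ piece[rule_format]] next_edge_less by metis
qed

lemma F_iterate_onto_arc:
  assumes "i < r" "Q < M ^ n" "j < r"
  shows "\<exists>p<M. \<exists>b. \<forall>u\<in>{0..1}.
    (F ^^ Suc n) (g i (adic_piece M (Suc n) (Q * M + p) u)) = g j (if b then u else 1 - u)"
proof -
  obtain s where s: "fst s < r"
    and piece: "\<forall>u\<in>{0..1}. (F ^^ n) (g i (adic_piece M n Q u)) = edge_path g s u"
    using F_iterate_piece[OF assms(1,2)] by blast
  obtain p b where p: "p < M" and next_eq: "next_edge s p = (j, b)"
    using next_edge_onto[OF assms(3)] .
  have "\<forall>u\<in>{0..1}. (F ^^ Suc n) (g i (adic_piece M (Suc n) (Q * M + p) u)) = g j (if b then u else 1 - u)"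
    using F_iterate_piece_step[OF s p piece[rule_format]] next_eq by (simp add: edge_path_def)
  then show ?thesis
    using p by blast
qed

lemma open_contains_arc_piece:
  assumes U: "openin (top_of_set E) U" "U \<noteq> {}"
  obtains i n Q where "i < r" "Q < M ^ n" "g i ` adic_piece M n Q ` {0..1} \<subseteq> U"
proof -
  obtain x where "x \<in> U"
    using U(2) by blast
  moreover obtain T where T: "open T" "U = E \<inter> T"
    using U(1) unfolding openin_open by blast
  ultimately obtain i s where i: "i < r" and s: "s \<in> {0..1}" and x: "x = g i s" "x \<in> T"
    by (auto elim: E_cases)
  obtain e where e: "e > 0" "ball x e \<subseteq> T"
    using T(1) x(2) open_contains_ball by blast
  have "continuous_on {0..1} (g i)"
    using arc[OF i] arc_imp_path path_def by blast
  then obtain \<delta> where \<delta>: "\<delta> > 0" "\<And>t. t \<in> {0..1} \<Longrightarrow> dist t s < \<delta> \<Longrightarrow> dist (g i t) x < e"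
    using s e(1) x(1) unfolding continuous_on_iff by blast
  define c where "c = max 0 (s - \<delta> / 2)"
  define d where "d = min 1 (s + \<delta> / 2)"
  have cd: "0 \<le> c" "c < d" "d \<le> 1"
    using s \<delta>(1) unfolding c_def d_def by auto
  have near: "g i t \<in> U" if "t \<in> {c..d}" for t
  proof -
    have "t \<in> {0..1}" "dist t s < \<delta>"
      using that cd \<delta>(1) unfolding c_def d_def dist_real_def by auto
    then show ?thesis
      using \<delta>(2) e(2) T(2) i arc_in_E by (auto simp: dist_commute)
  qed
  obtain n Q where Q: "Q < M ^ n" and sub: "adic_piece M n Q ` {0..1} \<subseteq> {c..d}"
    using adic_interval_within[OF tour_length cd] .
  have "g i ` adic_piece M n Q ` {0..1} \<subseteq> U"
    using sub near by auto
  then show ?thesis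
    by (rule that[OF i Q])
qed

lemma F_iterate_image_covers_arc:
  assumes U: "openin (top_of_set E) U" "U \<noteq> {}" and j: "j < r"
  obtains n where "n > 0" "path_image (g j) \<subseteq> (F ^^ n) ` U"
proof -
  obtain i n Q where i: "i < r" and Q: "Q < M ^ n" and piece: "g i ` adic_piece M n Q ` {0..1} \<subseteq> U"
    by (rule open_contains_arc_piece[OF U])
  obtain p b where p: "p < M" and onto:
    "\<forall>u\<in>{0..1}. (F ^^ Suc n) (g i (adic_piece M (Suc n) (Q * M + p) u)) = g j (if b then u else 1 - u)"
    using F_iterate_onto_arc[OF i Q j] by blast
  have "g j s \<in> (F ^^ Suc n) ` U" if s: "s \<in> {0..1}" for s
  proof -
    define u where "u = (if b then s else 1 - s)"
    have u: "u \<in> {0..1}" and "(F ^^ Suc n) (g i (adic_piece M (Suc n) (Q * M + p) u)) = g j s"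
      using onto s unfolding u_def by auto
    moreover have "g i (adic_piece M (Suc n) (Q * M + p) u) \<in> U"
      using piece adic_subpiece[OF p] u by blast
    ultimately show ?thesis
      by (metis image_eqI)
  qed
  then show ?thesis
    using that[of "Suc n"] unfolding path_image_def by blast
qed

lemma F_transitive: "topologically_transitive_on E F"
  unfolding topologically_transitive_on_def
proof (intro allI impI)
  fix U V
  assume UV: "openin (top_of_set E) U \<and> openin (top_of_set E) V \<and> U \<noteq> {} \<and> V \<noteq> {}"
  then obtain y where y: "y \<in> V" "y \<in> E"
    using openin_imp_subset by blast
  then obtain j s where j: "j < r" and "s \<in> {0..1}" "y = g j s"
    by (elim E_cases)
  then have "y \<in> path_image (g j)"
    unfolding path_image_def by blast
  moreover obtain n where "n > 0" "path_image (g j) \<subseteq> (F ^^ n) ` U"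
    using F_iterate_image_covers_arc[of U j] UV j by blast
  ultimately show "\<exists>n>0. (F ^^ n) ` U \<inter> V \<noteq> {}"
    using y by blast
qed

lemma F_periodic_points_dense: "periodic_points_dense_on E F"
  unfolding periodic_points_dense_on_def
proof
  fix x
  assume x: "x \<in> E"
  show "x \<in> closure {x \<in> E. \<exists>n>0. (F ^^ n) x = x}"
    unfolding closure_approachable
  proof (intro allI impI)
    fix e :: real
    assume "e > 0"
    then have "openin (top_of_set E) (E \<inter> ball x e)" "E \<inter> ball x e \<noteq> {}"
      using x by (auto intro: openin_open_Int)
    then obtain i n Q where i: "i < r" and Q: "Q < M ^ n"
      and piece: "g i ` adic_piece M n Q ` {0..1} \<subseteq> E \<inter> ball x e"
      by (rule open_contains_arc_piece)
    obtain p b where p: "p < M" and onto: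
      "\<forall>u\<in>{0..1}. (F ^^ Suc n) (g i (adic_piece M (Suc n) (Q * M + p) u)) = g i (if b then u else 1 - u)"
      using F_iterate_onto_arc[OF i Q i] by blast
    define \<phi> where "\<phi> u = adic_piece M (Suc n) (Q * M + p) (if b then u else 1 - u)" for u
    have "\<phi> \<in> {0..1} \<rightarrow> {0..1}"
      using adic_piece_in_unit[OF adic_subpiece_index_less[OF Q p]] unfolding \<phi>_def by auto
    moreover have "continuous_on {0..1} \<phi>"
      using tour_nonempty unfolding \<phi>_def adic_piece_def by (cases b) (auto intro!: continuous_intros)
    ultimately obtain t where t: "t \<in> {0..1}" "\<phi> t = t"
      using brouwer[of "{0..1::real}" \<phi>] by auto
    define u where "u = (if b then t else 1 - t)"
    have u: "u \<in> {0..1}" "t = adic_piece M (Suc n) (Q * M + p) u"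
      using t unfolding u_def \<phi>_def by auto
    then have "(F ^^ Suc n) (g i t) = g i (if b then u else 1 - u)"
      using onto by simp
    also have "\<dots> = g i t"
      by (simp add: u_def)
    finally have "(F ^^ Suc n) (g i t) = g i t" .
    moreover have "g i t \<in> E \<inter> ball x e"
      using piece adic_subpiece[OF p] u by blast
    ultimately show "\<exists>y\<in>{x \<in> E. \<exists>n>0. (F ^^ n) x = x}. dist y x < e"
      by (intro bexI[of _ "g i t"]) (auto simp: dist_commute)
  qed
qed

lemma F_sensitive: "sensitive_on E F"
proof -
  define \<eta> where "\<eta> = dist (g 0 0) (g 0 1) / 3"
  have "g 0 0 \<noteq> g 0 1"
    using arc_eq_iff[of 0 0 1] r_pos by auto
  then have \<eta>: "\<eta> > 0"
    by (simp add: \<eta>_def)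
  have separate: "\<exists>y\<in>N. \<exists>n. dist ((F ^^ n) x) ((F ^^ n) y) > \<eta>"
    if UN: "U \<subseteq> N" and U: "openin (top_of_set E) U" and x: "x \<in> U" for x N U
  proof -
    have "U \<noteq> {}" "0 < r"
      using x r_pos by auto
    then obtain n where covers: "path_image (g 0) \<subseteq> (F ^^ n) ` U"
      using F_iterate_image_covers_arc[OF U] by blast
    have reach: "g 0 v \<in> (F ^^ n) ` N" if "v \<in> {0..1}" for v
      using that covers UN unfolding path_image_def by blast
    obtain y0 where y0: "y0 \<in> N" "(F ^^ n) y0 = g 0 0"
      using reach[of 0] by auto
    obtain y1 where y1: "y1 \<in> N" "(F ^^ n) y1 = g 0 1"
      using reach[of 1] by auto
    have "dist ((F ^^ n) x) (g 0 0) > \<eta> \<or> dist ((F ^^ n) x) (g 0 1) > \<eta>"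
      using dist_triangle3[of "g 0 0" "g 0 1" "(F ^^ n) x"] \<eta> unfolding \<eta>_def by linarith
    then show ?thesis
    proof
      assume "dist ((F ^^ n) x) (g 0 0) > \<eta>"
      then show ?thesis
        using y0 by (intro bexI[of _ y0] exI[of _ n]) auto
    next
      assume "dist ((F ^^ n) x) (g 0 1) > \<eta>"
      then show ?thesis
        using y1 by (intro bexI[of _ y1] exI[of _ n]) auto
    qed
  qed
  show ?thesis
    unfolding sensitive_on_def
  proof (intro exI[of _ \<eta>] conjI \<eta> ballI allI impI)
    fix x N
    assume "N \<subseteq> E \<and> x \<in> N \<and> (\<exists>U. openin (top_of_set E) U \<and> x \<in> U \<and> U \<subseteq> N)"
    then obtain U where "U \<subseteq> N" "openin (top_of_set E) U" "x \<in> U"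
      by blast
    then show "\<exists>y\<in>N. \<exists>n. dist ((F ^^ n) x) ((F ^^ n) y) > \<eta>"
      by (rule separate)
  qed
qed

lemma F_iterate_pullback_piece:
  assumes onto: "\<forall>u\<in>{0..1}. (F ^^ k) (g j (adic_piece M m P u)) = g i (if b then u else 1 - u)"
    and Q: "Q < M ^ n"
  obtains R where "adic_piece M (m + n) R ` {0..1} \<subseteq> adic_piece M m P ` {0..1}"
    "\<forall>t\<in>adic_piece M (m + n) R ` {0..1}. (F ^^ k) (g j t) \<in> g i ` adic_piece M n Q ` {0..1}"
proof -
  text \<open>For \<open>b = False\<close> the map onto \<open>g i\<close> reverses the orientation, so the mirror piece
    is pulled back.\<close>
  define Q' where "Q' = (if b then Q else M ^ n - 1 - Q)"
  have Q': "Q' < M ^ n"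
    using Q by (auto simp: Q'_def)
  have oriented: "(if b then adic_piece M n Q' u else 1 - adic_piece M n Q' u)
      = adic_piece M n Q (if b then u else 1 - u)" for u
    using adic_piece_reflect[OF Q', of u] Q by (auto simp: Q'_def)
  have compose: "adic_piece M (m + n) (P * M ^ n + Q') u = adic_piece M m P (adic_piece M n Q' u)" for u
    using adic_piece_compose M_pos by simp
  have inner: "adic_piece M n Q' u \<in> {0..1}" if "u \<in> {0..1}" for u
    using adic_piece_in_unit[OF Q' that] .
  have "adic_piece M (m + n) (P * M ^ n + Q') ` {0..1} \<subseteq> adic_piece M m P ` {0..1}"
    using inner by (auto simp: compose)
  moreover have "\<forall>t\<in>adic_piece M (m + n) (P * M ^ n + Q') ` {0..1}.
      (F ^^ k) (g j t) \<in> g i ` adic_piece M n Q ` {0..1}"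
  proof
    fix t
    assume "t \<in> adic_piece M (m + n) (P * M ^ n + Q') ` {0..1}"
    then obtain u where u: "u \<in> {0..1}" and t: "t = adic_piece M m P (adic_piece M n Q' u)"
      by (auto simp: compose)
    have "(F ^^ k) (g j t) = g i (if b then adic_piece M n Q' u else 1 - adic_piece M n Q' u)"
      using bspec[OF onto inner[OF u]] unfolding t .
    also have "\<dots> = g i (adic_piece M n Q (if b then u else 1 - u))"
      by (simp only: oriented)
    finally show "(F ^^ k) (g j t) \<in> g i ` adic_piece M n Q ` {0..1}"
      using u by auto
  qed
  ultimately show ?thesis
    by (rule that)
qed

lemma F_iterate_hits_piece:
  assumes cd: "0 \<le> c" "c < d" "d \<le> 1" and i: "i < r" and Q: "Q < M ^ n"
  obtains c' d' k where "c \<le> c'" "c' < d'" "d' \<le> d"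
    "\<forall>t\<in>{c'..d'}. (F ^^ k) (g 0 t) \<in> g i ` adic_piece M n Q ` {0..1}"
proof -
  obtain m P where P: "P < M ^ m" and in_cd: "adic_piece M m P ` {0..1} \<subseteq> {c..d}"
    using adic_interval_within[OF tour_length cd] .
  have "0 < r"
    using r_pos by simp
  then obtain p b where p: "p < M" and onto:
    "\<forall>u\<in>{0..1}. (F ^^ Suc m) (g 0 (adic_piece M (Suc m) (P * M + p) u)) = g i (if b then u else 1 - u)"
    using F_iterate_onto_arc[OF _ P i] by blast
  obtain R where sub: "adic_piece M (Suc m + n) R ` {0..1} \<subseteq> adic_piece M (Suc m) (P * M + p) ` {0..1}"
    and hit: "\<forall>t\<in>adic_piece M (Suc m + n) R ` {0..1}. (F ^^ Suc m) (g 0 t) \<in> g i ` adic_piece M n Q ` {0..1}"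
    by (rule F_iterate_pullback_piece[OF onto Q])
  define c' where "c' = adic_piece M (Suc m + n) R 0"
  define d' where "d' = adic_piece M (Suc m + n) R 1"
  have interval: "{c'..d'} = adic_piece M (Suc m + n) R ` {0..1}"
    unfolding c'_def d'_def using M_pos by (simp add: adic_piece_image)
  have "{c'..d'} \<subseteq> {c..d}"
    unfolding interval using sub adic_subpiece[OF p] in_cd by blast
  moreover have "c' < d'"
    unfolding c'_def d'_def using M_pos by (simp add: adic_piece_strict_mono)
  ultimately have "c \<le> c'" "c' < d'" "d' \<le> d"
    by auto
  moreover have "\<forall>t\<in>{c'..d'}. (F ^^ Suc m) (g 0 t) \<in> g i ` adic_piece M n Q ` {0..1}"
    unfolding interval by (rule hit)
  ultimately show ?thesis
    by (rule that)
qed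

lemma orbit_hitting_all_pieces:
  "\<exists>t\<in>{0..1}. \<forall>i n Q. i < r \<longrightarrow> Q < M ^ n \<longrightarrow>
    (\<exists>k. (F ^^ k) (g 0 t) \<in> g i ` adic_piece M n Q ` {0..1})"
proof -
  define hits :: "nat \<times> nat \<times> nat \<Rightarrow> real \<Rightarrow> bool" where
    "hits iq t \<longleftrightarrow> (case iq of (i, n, Q) \<Rightarrow>
        i < r \<and> Q < M ^ n \<longrightarrow> (\<exists>k. (F ^^ k) (g 0 t) \<in> g i ` adic_piece M n Q ` {0..1}))" for iq t
  have "\<exists>t\<in>{0..1}. \<forall>iq. hits iq t"
  proof (rule nested_intervals_countable)
    fix iq :: "nat \<times> nat \<times> nat" and c d :: real
    assume cd: "0 \<le> c" "c < d" "d \<le> 1"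
    obtain i n Q where iq: "iq = (i, n, Q)"
      by (cases iq)
    show "\<exists>c' d'. c \<le> c' \<and> c' < d' \<and> d' \<le> d \<and> (\<forall>t\<in>{c'..d'}. hits iq t)"
    proof (cases "i < r \<and> Q < M ^ n")
      case True
      then have "i < r" "Q < M ^ n"
        by auto
      then obtain c' d' k where c'd': "c \<le> c'" "c' < d'" "d' \<le> d"
        and hit: "\<forall>t\<in>{c'..d'}. (F ^^ k) (g 0 t) \<in> g i ` adic_piece M n Q ` {0..1}"
        by (rule F_iterate_hits_piece[OF cd])
      have "hits iq t" if "t \<in> {c'..d'}" for t
        unfolding hits_def iq prod.case using hit that by blast
      then show ?thesis
        using c'd' by blast
    next
      case False
      then show ?thesis
        unfolding hits_def iq prod.case using cd by blast
    qed
  qed simp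
  then obtain t where t: "t \<in> {0..1}" and hits: "\<And>iq. hits iq t"
    by blast
  have "\<exists>k. (F ^^ k) (g 0 t) \<in> g i ` adic_piece M n Q ` {0..1}" if "i < r" "Q < M ^ n" for i n Q
    using hits[of "(i, n, Q)"] that unfolding hits_def prod.case by blast
  then show ?thesis
    using t by blast
qed

lemma F_dense_orbit: "has_dense_orbit_on E F"
proof -
  obtain t where t: "t \<in> {0..1}" and hits: "\<forall>i n Q. i < r \<longrightarrow> Q < M ^ n \<longrightarrow>
      (\<exists>k. (F ^^ k) (g 0 t) \<in> g i ` adic_piece M n Q ` {0..1})"
    using orbit_hitting_all_pieces by blast
  have "y \<in> closure (range (\<lambda>k. (F ^^ k) (g 0 t)))" if y: "y \<in> E" for y
    unfolding closure_approachable
  proof (intro allI impI)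
    fix e :: real
    assume "e > 0"
    then have "openin (top_of_set E) (E \<inter> ball y e)" "E \<inter> ball y e \<noteq> {}"
      using y by (auto intro: openin_open_Int)
    then obtain i n Q where i: "i < r" and Q: "Q < M ^ n"
      and piece: "g i ` adic_piece M n Q ` {0..1} \<subseteq> E \<inter> ball y e"
      by (rule open_contains_arc_piece)
    obtain k where "(F ^^ k) (g 0 t) \<in> E \<inter> ball y e"
      using hits[rule_format, OF i Q] piece by blast
    then show "\<exists>z\<in>range (\<lambda>k. (F ^^ k) (g 0 t)). dist z y < e"
      by (auto simp: dist_commute)
  qed
  moreover have "g 0 t \<in> E"
    using t r_pos by (simp add: arc_in_E)
  ultimately show ?thesis
    unfolding has_dense_orbit_on_def by blast
qed

end

lemma finite_graph_arc_graph:
  assumes "finite_graph E"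
  shows "\<exists>r g. arc_graph E r g"
  using assms unfolding finite_graph_def arc_graph_def
  by (elim conjE exE, intro exI conjI) (assumption | blast)+

theorem mainTheorem10:
  fixes E :: "'a::metric_space set"
  assumes "finite_graph E"
  shows "\<exists>F. continuous_on E F \<and> F ` E = E \<and> topologically_transitive_on E F \<and>
             has_dense_orbit_on E F \<and> periodic_points_dense_on E F \<and> chaotic_on E F"
proof -
  obtain r g where "arc_graph E r g"
    using finite_graph_arc_graph[OF assms] by blast
  then interpret arc_graph E r g .
  obtain L where "walk g r (g 0 0) L (g 0 0)" "length L \<ge> 2" "\<And>j. j < r \<Longrightarrow> (j, True) \<in> set L"
    using closed_walk_through_all_arcs by blast
  then interpret arc_graph_tour E r g L
    by unfold_locales
  show ?thesis
    using continuous_on_F F_image F_transitive F_dense_orbit F_periodic_points_dense F_sensitive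
    unfolding chaotic_on_def by blast
qed

end
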